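(* Let $\mathcal K$ be a 2-category and $\mathscr D\subseteq\mathcal K$ a dense inclusion. Let $f:A\to C$, $g:A\to B$, $h:B\to C$ be 1-cells and $\phi:f\Rightarrow hg$ a 2-cell. If for every object $D\in\mathscr D$ and every 1-cell $a:D\to A$ the 2-cell $\phi a$ exhibits $ga$ as a left lifting of $fa$ along $h$, then $\phi$ exhibits $g$ as an absolute left lifting of $f$ along $h$.
   Context: A full sub-2-category $\mathscr D\subseteq\mathcal K$ is dense if the 2-functor $\mathcal K\to[\mathscr D^{op},\mathrm{CAT}]$, $X\mapsto\mathcal K(-,X)|_{\mathscr D}$, is fully faithful (an isomorphism on hom-categories). Given $f:A\to C$, $g:A\to B$, $h:B\to C$, a 2-cell $\phi:f\Rightarrow hg$ exhibits $g$ as a left lifting of $f$ along $h$ if for every $k:A\to B$ the assignment $\kappa\mapsto(h\kappa)\cdot\phi$ is a bijection from 2-cells $g\Rightarrow k$ to 2-cells $f\Rightarrow hk$; this left lifting is absolute if for every $j:X\to A$, $\phi j$ exhibits $gj$ as a left lifting of $fj$ along $h$. *)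

theory Defs
  imports Main
begin

text \<open>Strict 2-categories, presented by sets of objects, 1-cells and 2-cells with
  source/target maps, composition of 1-cells ('comp1 g f' = g after f), vertical
  composition ('vcomp beta alpha' = beta after alpha) and horizontal composition
  ('hcomp beta alpha', where alpha lives on the domain side, like 'comp1').\<close>

record ('o, 'a, 'c) two_cat =
  Ob :: "'o set"
  Arr :: "'a set"
  Cel :: "'c set"
  src1 :: "'a \<Rightarrow> 'o"
  tgt1 :: "'a \<Rightarrow> 'o"
  dom2 :: "'c \<Rightarrow> 'a"
  cod2 :: "'c \<Rightarrow> 'a"
  comp1 :: "'a \<Rightarrow> 'a \<Rightarrow> 'a"
  id1 :: "'o \<Rightarrow> 'a"
  vcomp :: "'c \<Rightarrow> 'c \<Rightarrow> 'c"
  id2 :: "'a \<Rightarrow> 'c"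
  hcomp :: "'c \<Rightarrow> 'c \<Rightarrow> 'c"

definition hom :: "('o, 'a, 'c, 'm) two_cat_scheme \<Rightarrow> 'o \<Rightarrow> 'o \<Rightarrow> 'a set" where
  "hom K A B = {f \<in> Arr K. src1 K f = A \<and> tgt1 K f = B}"

definition cells :: "('o, 'a, 'c, 'm) two_cat_scheme \<Rightarrow> 'a \<Rightarrow> 'a \<Rightarrow> 'c set" where
  "cells K f g = {\<theta> \<in> Cel K. dom2 K \<theta> = f \<and> cod2 K \<theta> = g}"

definition two_category :: "('o, 'a, 'c, 'm) two_cat_scheme \<Rightarrow> bool" where
  "two_category K \<longleftrightarrow>
     (\<forall>f\<in>Arr K. src1 K f \<in> Ob K \<and> tgt1 K f \<in> Ob K)
   \<and> (\<forall>\<theta>\<in>Cel K. dom2 K \<theta> \<in> Arr K \<and> cod2 K \<theta> \<in> Arr K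
        \<and> src1 K (dom2 K \<theta>) = src1 K (cod2 K \<theta>) \<and> tgt1 K (dom2 K \<theta>) = tgt1 K (cod2 K \<theta>))
   \<comment> \<open>underlying 1-category\<close>
   \<and> (\<forall>A\<in>Ob K. id1 K A \<in> hom K A A)
   \<and> (\<forall>A B C f g. f \<in> hom K A B \<longrightarrow> g \<in> hom K B C \<longrightarrow> comp1 K g f \<in> hom K A C)
   \<and> (\<forall>A B C D f g h. f \<in> hom K A B \<longrightarrow> g \<in> hom K B C \<longrightarrow> h \<in> hom K C D \<longrightarrow>
        comp1 K h (comp1 K g f) = comp1 K (comp1 K h g) f)
   \<and> (\<forall>A B f. f \<in> hom K A B \<longrightarrow> comp1 K (id1 K B) f = f \<and> comp1 K f (id1 K A) = f)
   \<comment> \<open>hom-categories (vertical composition)\<close>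
   \<and> (\<forall>f\<in>Arr K. id2 K f \<in> cells K f f)
   \<and> (\<forall>f g h \<alpha> \<beta>. \<alpha> \<in> cells K f g \<longrightarrow> \<beta> \<in> cells K g h \<longrightarrow> vcomp K \<beta> \<alpha> \<in> cells K f h)
   \<and> (\<forall>f g h i \<alpha> \<beta> \<gamma>. \<alpha> \<in> cells K f g \<longrightarrow> \<beta> \<in> cells K g h \<longrightarrow> \<gamma> \<in> cells K h i \<longrightarrow>
        vcomp K \<gamma> (vcomp K \<beta> \<alpha>) = vcomp K (vcomp K \<gamma> \<beta>) \<alpha>)
   \<and> (\<forall>f g \<alpha>. \<alpha> \<in> cells K f g \<longrightarrow> vcomp K (id2 K g) \<alpha> = \<alpha> \<and> vcomp K \<alpha> (id2 K f) = \<alpha>)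
   \<comment> \<open>horizontal composition: typing, functoriality (identities and interchange)\<close>
   \<and> (\<forall>A B C f f' g g' \<alpha> \<beta>. f \<in> hom K A B \<longrightarrow> f' \<in> hom K A B \<longrightarrow> g \<in> hom K B C \<longrightarrow> g' \<in> hom K B C
        \<longrightarrow> \<alpha> \<in> cells K f f' \<longrightarrow> \<beta> \<in> cells K g g' \<longrightarrow>
        hcomp K \<beta> \<alpha> \<in> cells K (comp1 K g f) (comp1 K g' f'))
   \<and> (\<forall>A B C f g. f \<in> hom K A B \<longrightarrow> g \<in> hom K B C \<longrightarrow>
        hcomp K (id2 K g) (id2 K f) = id2 K (comp1 K g f))
   \<and> (\<forall>A B C f f' f'' g g' g'' \<alpha> \<alpha>' \<beta> \<beta>'.
        f \<in> hom K A B \<longrightarrow> f' \<in> hom K A B \<longrightarrow> f'' \<in> hom K A B \<longrightarrow>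
        g \<in> hom K B C \<longrightarrow> g' \<in> hom K B C \<longrightarrow> g'' \<in> hom K B C \<longrightarrow>
        \<alpha> \<in> cells K f f' \<longrightarrow> \<alpha>' \<in> cells K f' f'' \<longrightarrow>
        \<beta> \<in> cells K g g' \<longrightarrow> \<beta>' \<in> cells K g' g'' \<longrightarrow>
        hcomp K (vcomp K \<beta>' \<beta>) (vcomp K \<alpha>' \<alpha>) = vcomp K (hcomp K \<beta>' \<alpha>') (hcomp K \<beta> \<alpha>))
   \<comment> \<open>horizontal composition: associativity and units\<close>
   \<and> (\<forall>A B C D f f' g g' h h' \<alpha> \<beta> \<gamma>.
        f \<in> hom K A B \<longrightarrow> f' \<in> hom K A B \<longrightarrow> g \<in> hom K B C \<longrightarrow> g' \<in> hom K B C \<longrightarrow>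
        h \<in> hom K C D \<longrightarrow> h' \<in> hom K C D \<longrightarrow>
        \<alpha> \<in> cells K f f' \<longrightarrow> \<beta> \<in> cells K g g' \<longrightarrow> \<gamma> \<in> cells K h h' \<longrightarrow>
        hcomp K \<gamma> (hcomp K \<beta> \<alpha>) = hcomp K (hcomp K \<gamma> \<beta>) \<alpha>)
   \<and> (\<forall>A B f f' \<alpha>. f \<in> hom K A B \<longrightarrow> f' \<in> hom K A B \<longrightarrow> \<alpha> \<in> cells K f f' \<longrightarrow>
        hcomp K (id2 K (id1 K B)) \<alpha> = \<alpha> \<and> hcomp K \<alpha> (id2 K (id1 K A)) = \<alpha>)"

text \<open>A 2-natural transformation between the 2-functors K(-,X) and K(-,Y) restricted to
  the full sub-2-category on the object set \<D>, given by its component functors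
  (object part 'ao', morphism part 'am').\<close>

definition two_nat ::
  "('o, 'a, 'c, 'm) two_cat_scheme \<Rightarrow> 'o set \<Rightarrow> 'o \<Rightarrow> 'o \<Rightarrow>
   ('o \<Rightarrow> 'a \<Rightarrow> 'a) \<Rightarrow> ('o \<Rightarrow> 'c \<Rightarrow> 'c) \<Rightarrow> bool" where
  "two_nat K \<D> X Y ao am \<longleftrightarrow>
     \<comment> \<open>each component is a functor K(D,X) -> K(D,Y)\<close>
     (\<forall>D\<in>\<D>. \<forall>u\<in>hom K D X. ao D u \<in> hom K D Y)
   \<and> (\<forall>D\<in>\<D>. \<forall>u\<in>hom K D X. \<forall>v\<in>hom K D X. \<forall>\<theta>\<in>cells K u v.
        am D \<theta> \<in> cells K (ao D u) (ao D v))
   \<and> (\<forall>D\<in>\<D>. \<forall>u\<in>hom K D X. am D (id2 K u) = id2 K (ao D u))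
   \<and> (\<forall>D\<in>\<D>. \<forall>u\<in>hom K D X. \<forall>v\<in>hom K D X. \<forall>w\<in>hom K D X. \<forall>\<theta>\<in>cells K u v. \<forall>\<eta>\<in>cells K v w.
        am D (vcomp K \<eta> \<theta>) = vcomp K (am D \<eta>) (am D \<theta>))
     \<comment> \<open>naturality in 1-cells of \<D>\<close>
   \<and> (\<forall>D\<in>\<D>. \<forall>D'\<in>\<D>. \<forall>d\<in>hom K D' D. \<forall>u\<in>hom K D X.
        ao D' (comp1 K u d) = comp1 K (ao D u) d)
   \<and> (\<forall>D\<in>\<D>. \<forall>D'\<in>\<D>. \<forall>d\<in>hom K D' D. \<forall>u\<in>hom K D X. \<forall>v\<in>hom K D X. \<forall>\<theta>\<in>cells K u v.
        am D' (hcomp K \<theta> (id2 K d)) = hcomp K (am D \<theta>) (id2 K d))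
     \<comment> \<open>naturality in 2-cells of \<D>\<close>
   \<and> (\<forall>D\<in>\<D>. \<forall>D'\<in>\<D>. \<forall>d\<in>hom K D' D. \<forall>d'\<in>hom K D' D. \<forall>\<delta>\<in>cells K d d'. \<forall>u\<in>hom K D X.
        am D' (hcomp K (id2 K u) \<delta>) = hcomp K (id2 K (ao D u)) \<delta>)"

definition modification ::
  "('o, 'a, 'c, 'm) two_cat_scheme \<Rightarrow> 'o set \<Rightarrow> 'o \<Rightarrow> 'o \<Rightarrow>
   ('o \<Rightarrow> 'a \<Rightarrow> 'a) \<Rightarrow> ('o \<Rightarrow> 'c \<Rightarrow> 'c) \<Rightarrow> ('o \<Rightarrow> 'a \<Rightarrow> 'a) \<Rightarrow> ('o \<Rightarrow> 'c \<Rightarrow> 'c) \<Rightarrow>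
   ('o \<Rightarrow> 'a \<Rightarrow> 'c) \<Rightarrow> bool" where
  "modification K \<D> X Y ao am bo bm \<Gamma> \<longleftrightarrow>
     (\<forall>D\<in>\<D>. \<forall>u\<in>hom K D X. \<Gamma> D u \<in> cells K (ao D u) (bo D u))
   \<and> (\<forall>D\<in>\<D>. \<forall>u\<in>hom K D X. \<forall>v\<in>hom K D X. \<forall>\<theta>\<in>cells K u v.
        vcomp K (bm D \<theta>) (\<Gamma> D u) = vcomp K (\<Gamma> D v) (am D \<theta>))
   \<and> (\<forall>D\<in>\<D>. \<forall>D'\<in>\<D>. \<forall>d\<in>hom K D' D. \<forall>u\<in>hom K D X.
        \<Gamma> D' (comp1 K u d) = hcomp K (\<Gamma> D u) (id2 K d))"

text \<open>Density: the 2-functor X |-> K(-,X) restricted to \<D> is an isomorphism on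
  hom-categories, i.e. bijective on 1-cells (onto 2-natural transformations) and on
  2-cells (onto modifications).\<close>

definition dense :: "('o, 'a, 'c, 'm) two_cat_scheme \<Rightarrow> 'o set \<Rightarrow> bool" where
  "dense K \<D> \<longleftrightarrow> \<D> \<subseteq> Ob K \<and>
    (\<forall>X\<in>Ob K. \<forall>Y\<in>Ob K.
      (\<forall>ao am. two_nat K \<D> X Y ao am \<longrightarrow>
         (\<exists>!f. f \<in> hom K X Y
            \<and> (\<forall>D\<in>\<D>. \<forall>u\<in>hom K D X. ao D u = comp1 K f u)
            \<and> (\<forall>D\<in>\<D>. \<forall>u\<in>hom K D X. \<forall>v\<in>hom K D X. \<forall>\<theta>\<in>cells K u v.
                 am D \<theta> = hcomp K (id2 K f) \<theta>)))
    \<and> (\<forall>f\<in>hom K X Y. \<forall>g\<in>hom K X Y. \<forall>\<Gamma>.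
         modification K \<D> X Y (\<lambda>D u. comp1 K f u) (\<lambda>D \<theta>. hcomp K (id2 K f) \<theta>)
                              (\<lambda>D u. comp1 K g u) (\<lambda>D \<theta>. hcomp K (id2 K g) \<theta>) \<Gamma> \<longrightarrow>
         (\<exists>!\<theta>. \<theta> \<in> cells K f g \<and> (\<forall>D\<in>\<D>. \<forall>u\<in>hom K D X. \<Gamma> D u = hcomp K \<theta> (id2 K u)))))"

definition left_lifting ::
  "('o, 'a, 'c, 'm) two_cat_scheme \<Rightarrow> 'a \<Rightarrow> 'a \<Rightarrow> 'a \<Rightarrow> 'c \<Rightarrow> bool" where
  "left_lifting K f g h \<phi> \<longleftrightarrow>
     \<phi> \<in> cells K f (comp1 K h g) \<and>
     (\<forall>k\<in>hom K (src1 K g) (tgt1 K g).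
        bij_betw (\<lambda>\<kappa>. vcomp K (hcomp K (id2 K h) \<kappa>) \<phi>) (cells K g k) (cells K f (comp1 K h k)))"

definition absolute_left_lifting ::
  "('o, 'a, 'c, 'm) two_cat_scheme \<Rightarrow> 'a \<Rightarrow> 'a \<Rightarrow> 'a \<Rightarrow> 'c \<Rightarrow> bool" where
  "absolute_left_lifting K f g h \<phi> \<longleftrightarrow>
     left_lifting K f g h \<phi> \<and>
     (\<forall>X\<in>Ob K. \<forall>j\<in>hom K X (src1 K g).
        left_lifting K (comp1 K f j) (comp1 K g j) h (hcomp K \<phi> (id2 K j)))"

end

theory Submission
  imports Defs
begin

text \<open>By density, a 2-cell out of an object X is determined by its restrictions along the 1-cells
  u : D \<rightarrow> X with D \<in> \<D>, and a family of 2-cells indexed by these u is such a family of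
  restrictions exactly when it is a modification. The map \<kappa> \<mapsto> (h \<kappa>) \<cdot> (\<phi> j) commutes with
  restriction along u, where it becomes the corresponding map for \<phi> j u, a bijection by
  hypothesis. Hence it is injective, and for \<psi> : f j \<Rightarrow> h k the unique lifts of the restrictions
  \<psi> u form a modification (again by uniqueness of lifts), which density glues to a preimage
  of \<psi>. Taking j to be an identity shows that \<phi> itself is a left lifting.\<close>

lemma mem_hom_iff [simp]: "f \<in> hom K A B \<longleftrightarrow> f \<in> Arr K \<and> src1 K f = A \<and> tgt1 K f = B"
  by (simp add: hom_def)

lemma mem_cells_iff [simp]: "\<theta> \<in> cells K f g \<longleftrightarrow> \<theta> \<in> Cel K \<and> dom2 K \<theta> = f \<and> cod2 K \<theta> = g"
  by (simp add: cells_def)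

locale strict_two_category =
  fixes K :: "('o, 'a, 'c, 'm) two_cat_scheme"
  assumes two_category: "two_category K"
begin

lemma arr_endpoints_Ob [simp]:
  assumes "f \<in> Arr K"
  shows "src1 K f \<in> Ob K" "tgt1 K f \<in> Ob K"
  using two_category assms unfolding two_category_def by simp_all

lemma cel_arr [simp]:
  assumes "\<theta> \<in> Cel K"
  shows "dom2 K \<theta> \<in> Arr K" "cod2 K \<theta> \<in> Arr K"
    "src1 K (cod2 K \<theta>) = src1 K (dom2 K \<theta>)" "tgt1 K (cod2 K \<theta>) = tgt1 K (dom2 K \<theta>)"
  using two_category assms unfolding two_category_def by simp_all

lemma id1_arr [simp]:
  assumes "A \<in> Ob K"
  shows "id1 K A \<in> Arr K" "src1 K (id1 K A) = A" "tgt1 K (id1 K A) = A"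
  using two_category assms unfolding two_category_def by simp_all

lemma comp1_arr [simp]:
  assumes "f \<in> Arr K" "g \<in> Arr K" "src1 K g = tgt1 K f"
  shows "comp1 K g f \<in> Arr K" "src1 K (comp1 K g f) = src1 K f" "tgt1 K (comp1 K g f) = tgt1 K g"
  using two_category assms unfolding two_category_def by simp_all

lemma comp1_assoc [simp]:
  assumes "f \<in> Arr K" "g \<in> Arr K" "h \<in> Arr K" "src1 K g = tgt1 K f" "src1 K h = tgt1 K g"
  shows "comp1 K (comp1 K h g) f = comp1 K h (comp1 K g f)"
  using two_category assms unfolding two_category_def by simp

lemma comp1_id1_right:
  assumes "f \<in> Arr K"
  shows "comp1 K f (id1 K (src1 K f)) = f"
  using two_category assms unfolding two_category_def by simp

lemma id2_cel [simp]:
  assumes "f \<in> Arr K"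
  shows "id2 K f \<in> Cel K" "dom2 K (id2 K f) = f" "cod2 K (id2 K f) = f"
  using two_category assms unfolding two_category_def by simp_all

lemma vcomp_cel [simp]:
  assumes "\<alpha> \<in> Cel K" "\<beta> \<in> Cel K" "dom2 K \<beta> = cod2 K \<alpha>"
  shows "vcomp K \<beta> \<alpha> \<in> Cel K" "dom2 K (vcomp K \<beta> \<alpha>) = dom2 K \<alpha>"
    "cod2 K (vcomp K \<beta> \<alpha>) = cod2 K \<beta>"
  using two_category assms unfolding two_category_def by simp_all

lemma vcomp_assoc:
  assumes "\<alpha> \<in> Cel K" "\<beta> \<in> Cel K" "\<gamma> \<in> Cel K" "dom2 K \<beta> = cod2 K \<alpha>" "dom2 K \<gamma> = cod2 K \<beta>"
  shows "vcomp K (vcomp K \<gamma> \<beta>) \<alpha> = vcomp K \<gamma> (vcomp K \<beta> \<alpha>)"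
  using two_category assms unfolding two_category_def by simp

lemma vcomp_id2 [simp]:
  assumes "\<alpha> \<in> Cel K"
  shows "vcomp K (id2 K (cod2 K \<alpha>)) \<alpha> = \<alpha>" "vcomp K \<alpha> (id2 K (dom2 K \<alpha>)) = \<alpha>"
  using two_category assms unfolding two_category_def by simp_all

lemma hcomp_id2 [simp]:
  assumes "f \<in> Arr K" "g \<in> Arr K" "src1 K g = tgt1 K f"
  shows "hcomp K (id2 K g) (id2 K f) = id2 K (comp1 K g f)"
  using two_category assms unfolding two_category_def by simp

lemma hcomp_in_cells:
  "f \<in> hom K A B \<Longrightarrow> f' \<in> hom K A B \<Longrightarrow> g \<in> hom K B C \<Longrightarrow> g' \<in> hom K B C \<Longrightarrow>
   \<alpha> \<in> cells K f f' \<Longrightarrow> \<beta> \<in> cells K g g' \<Longrightarrow>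
   hcomp K \<beta> \<alpha> \<in> cells K (comp1 K g f) (comp1 K g' f')"
  using two_category unfolding two_category_def by (simp del: mem_hom_iff mem_cells_iff)

lemma hcomp_cel [simp]:
  assumes "\<alpha> \<in> Cel K" "\<beta> \<in> Cel K" "src1 K (dom2 K \<beta>) = tgt1 K (dom2 K \<alpha>)"
  shows "hcomp K \<beta> \<alpha> \<in> Cel K" "dom2 K (hcomp K \<beta> \<alpha>) = comp1 K (dom2 K \<beta>) (dom2 K \<alpha>)"
    "cod2 K (hcomp K \<beta> \<alpha>) = comp1 K (cod2 K \<beta>) (cod2 K \<alpha>)"
  using hcomp_in_cells[of "dom2 K \<alpha>" _ _ "cod2 K \<alpha>" "dom2 K \<beta>" _ "cod2 K \<beta>"] assms by simp_all

lemma interchange_hom: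
  "f \<in> hom K A B \<Longrightarrow> f' \<in> hom K A B \<Longrightarrow> f'' \<in> hom K A B \<Longrightarrow>
   g \<in> hom K B C \<Longrightarrow> g' \<in> hom K B C \<Longrightarrow> g'' \<in> hom K B C \<Longrightarrow>
   \<alpha> \<in> cells K f f' \<Longrightarrow> \<alpha>' \<in> cells K f' f'' \<Longrightarrow> \<beta> \<in> cells K g g' \<Longrightarrow> \<beta>' \<in> cells K g' g'' \<Longrightarrow>
   hcomp K (vcomp K \<beta>' \<beta>) (vcomp K \<alpha>' \<alpha>) = vcomp K (hcomp K \<beta>' \<alpha>') (hcomp K \<beta> \<alpha>)"
  using two_category unfolding two_category_def by (simp del: mem_hom_iff mem_cells_iff)

lemma interchange:
  assumes "\<alpha> \<in> Cel K" "\<alpha>' \<in> Cel K" "\<beta> \<in> Cel K" "\<beta>' \<in> Cel K"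
    "dom2 K \<alpha>' = cod2 K \<alpha>" "dom2 K \<beta>' = cod2 K \<beta>" "src1 K (dom2 K \<beta>) = tgt1 K (dom2 K \<alpha>)"
  shows "hcomp K (vcomp K \<beta>' \<beta>) (vcomp K \<alpha>' \<alpha>) = vcomp K (hcomp K \<beta>' \<alpha>') (hcomp K \<beta> \<alpha>)"
  using interchange_hom[of "dom2 K \<alpha>" _ _ "cod2 K \<alpha>" "cod2 K \<alpha>'" "dom2 K \<beta>" _ "cod2 K \<beta>" "cod2 K \<beta>'"]
    assms by simp

lemma hcomp_assoc_hom:
  "f \<in> hom K A B \<Longrightarrow> f' \<in> hom K A B \<Longrightarrow> g \<in> hom K B C \<Longrightarrow> g' \<in> hom K B C \<Longrightarrow>
   h \<in> hom K C D \<Longrightarrow> h' \<in> hom K C D \<Longrightarrow>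
   \<alpha> \<in> cells K f f' \<Longrightarrow> \<beta> \<in> cells K g g' \<Longrightarrow> \<gamma> \<in> cells K h h' \<Longrightarrow>
   hcomp K \<gamma> (hcomp K \<beta> \<alpha>) = hcomp K (hcomp K \<gamma> \<beta>) \<alpha>"
  using two_category unfolding two_category_def by (simp del: mem_hom_iff mem_cells_iff)

lemma hcomp_assoc:
  assumes "\<alpha> \<in> Cel K" "\<beta> \<in> Cel K" "\<gamma> \<in> Cel K"
    "src1 K (dom2 K \<beta>) = tgt1 K (dom2 K \<alpha>)" "src1 K (dom2 K \<gamma>) = tgt1 K (dom2 K \<beta>)"
  shows "hcomp K (hcomp K \<gamma> \<beta>) \<alpha> = hcomp K \<gamma> (hcomp K \<beta> \<alpha>)"
  using hcomp_assoc_hom[of "dom2 K \<alpha>" _ _ "cod2 K \<alpha>" "dom2 K \<beta>" _ "cod2 K \<beta>" "dom2 K \<gamma>" _ "cod2 K \<gamma>"]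
    assms by simp

lemma hcomp_id2_id1_hom:
  "f \<in> hom K A B \<Longrightarrow> f' \<in> hom K A B \<Longrightarrow> \<alpha> \<in> cells K f f' \<Longrightarrow>
   hcomp K \<alpha> (id2 K (id1 K A)) = \<alpha>"
  using two_category unfolding two_category_def by (simp del: mem_hom_iff mem_cells_iff)

lemma hcomp_id2_id1_right:
  assumes "\<alpha> \<in> Cel K"
  shows "hcomp K \<alpha> (id2 K (id1 K (src1 K (dom2 K \<alpha>)))) = \<alpha>"
  using hcomp_id2_id1_hom[of "dom2 K \<alpha>" _ _ "cod2 K \<alpha>"] assms by simp

lemma whisker_right_vcomp:
  assumes "\<alpha> \<in> Cel K" "\<beta> \<in> Cel K" "dom2 K \<beta> = cod2 K \<alpha>" "u \<in> Arr K" "src1 K (dom2 K \<alpha>) = tgt1 K u"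
  shows "hcomp K (vcomp K \<beta> \<alpha>) (id2 K u) = vcomp K (hcomp K \<beta> (id2 K u)) (hcomp K \<alpha> (id2 K u))"
  using interchange[of "id2 K u" "id2 K u" \<alpha> \<beta>] vcomp_id2[of "id2 K u"] assms by simp

lemma whisker_left_vcomp:
  assumes "\<alpha> \<in> Cel K" "\<beta> \<in> Cel K" "dom2 K \<beta> = cod2 K \<alpha>" "h \<in> Arr K" "src1 K h = tgt1 K (dom2 K \<alpha>)"
  shows "hcomp K (id2 K h) (vcomp K \<beta> \<alpha>) = vcomp K (hcomp K (id2 K h) \<beta>) (hcomp K (id2 K h) \<alpha>)"
  using interchange[of \<alpha> \<beta> "id2 K h" "id2 K h"] vcomp_id2[of "id2 K h"] assms by simp

lemma hcomp_eq_vcomp_whiskers: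
  assumes "\<alpha> \<in> Cel K" "\<beta> \<in> Cel K" "src1 K (dom2 K \<beta>) = tgt1 K (dom2 K \<alpha>)"
  shows "hcomp K \<beta> \<alpha> = vcomp K (hcomp K \<beta> (id2 K (cod2 K \<alpha>))) (hcomp K (id2 K (dom2 K \<beta>)) \<alpha>)"
    and "hcomp K \<beta> \<alpha> = vcomp K (hcomp K (id2 K (cod2 K \<beta>)) \<alpha>) (hcomp K \<beta> (id2 K (dom2 K \<alpha>)))"
  using interchange[of \<alpha> "id2 K (cod2 K \<alpha>)" "id2 K (dom2 K \<beta>)" \<beta>]
    interchange[of "id2 K (dom2 K \<alpha>)" \<alpha> \<beta> "id2 K (cod2 K \<beta>)"] assms by simp_all

lemma whisker_right_comp1:
  assumes "\<theta> \<in> Cel K" "u \<in> Arr K" "d \<in> Arr K" "src1 K (dom2 K \<theta>) = tgt1 K u" "src1 K u = tgt1 K d"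
  shows "hcomp K (hcomp K \<theta> (id2 K u)) (id2 K d) = hcomp K \<theta> (id2 K (comp1 K u d))"
  using hcomp_assoc[of "id2 K d" "id2 K u" \<theta>] assms by simp

lemma whisker_left_comp1:
  assumes "\<theta> \<in> Cel K" "k \<in> Arr K" "h \<in> Arr K" "src1 K k = tgt1 K (dom2 K \<theta>)" "src1 K h = tgt1 K k"
  shows "hcomp K (id2 K h) (hcomp K (id2 K k) \<theta>) = hcomp K (id2 K (comp1 K h k)) \<theta>"
  using hcomp_assoc[of \<theta> "id2 K k" "id2 K h"] assms by simp

lemma whisker_left_right:
  assumes "\<theta> \<in> Cel K" "u \<in> Arr K" "h \<in> Arr K" "src1 K (dom2 K \<theta>) = tgt1 K u" "src1 K h = tgt1 K (dom2 K \<theta>)"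
  shows "hcomp K (hcomp K (id2 K h) \<theta>) (id2 K u) = hcomp K (id2 K h) (hcomp K \<theta> (id2 K u))"
  using hcomp_assoc[of "id2 K u" \<theta> "id2 K h"] assms by simp

abbreviation restricted_modification ::
  "'o set \<Rightarrow> 'o \<Rightarrow> 'o \<Rightarrow> 'a \<Rightarrow> 'a \<Rightarrow> ('o \<Rightarrow> 'a \<Rightarrow> 'c) \<Rightarrow> bool" where
  "restricted_modification \<D> X Y p q \<Gamma> \<equiv>
     modification K \<D> X Y (\<lambda>D u. comp1 K p u) (\<lambda>D \<theta>. hcomp K (id2 K p) \<theta>)
       (\<lambda>D u. comp1 K q u) (\<lambda>D \<theta>. hcomp K (id2 K q) \<theta>) \<Gamma>"

lemma whisker_restricted_modification:
  assumes "p \<in> hom K X Y" "q \<in> hom K X Y" "\<theta> \<in> cells K p q"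
  shows "restricted_modification \<D> X Y p q (\<lambda>D u. hcomp K \<theta> (id2 K u))"
  unfolding modification_def
proof (intro conjI ballI)
  fix D u v \<theta>' assume "u \<in> hom K D X" "v \<in> hom K D X" "\<theta>' \<in> cells K u v"
  then show "vcomp K (hcomp K (id2 K q) \<theta>') (hcomp K \<theta> (id2 K u)) =
      vcomp K (hcomp K \<theta> (id2 K v)) (hcomp K (id2 K p) \<theta>')"
    using hcomp_eq_vcomp_whiskers[of \<theta>' \<theta>] assms by simp
qed (use assms whisker_right_comp1 in auto)

lemma dense_restricted_modificationD:
  assumes "dense K \<D>" "p \<in> hom K X Y" "q \<in> hom K X Y" "restricted_modification \<D> X Y p q \<Gamma>"
  shows "\<exists>!\<theta>. \<theta> \<in> cells K p q \<and> (\<forall>D\<in>\<D>. \<forall>u\<in>hom K D X. \<Gamma> D u = hcomp K \<theta> (id2 K u))"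
proof -
  have "\<forall>X\<in>Ob K. \<forall>Y\<in>Ob K. \<forall>p\<in>hom K X Y. \<forall>q\<in>hom K X Y. \<forall>\<Gamma>.
      restricted_modification \<D> X Y p q \<Gamma> \<longrightarrow>
      (\<exists>!\<theta>. \<theta> \<in> cells K p q \<and> (\<forall>D\<in>\<D>. \<forall>u\<in>hom K D X. \<Gamma> D u = hcomp K \<theta> (id2 K u)))"
    using assms(1) unfolding dense_def by simp
  moreover have "X \<in> Ob K" "Y \<in> Ob K" using assms(2) by auto
  ultimately show ?thesis using assms(2-4) by blast
qed

lemma dense_cells_eqI:
  assumes "dense K \<D>" "\<theta>1 \<in> cells K p q" "\<theta>2 \<in> cells K p q"
    and "\<And>D u. D \<in> \<D> \<Longrightarrow> u \<in> hom K D (src1 K p) \<Longrightarrow> hcomp K \<theta>1 (id2 K u) = hcomp K \<theta>2 (id2 K u)"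
  shows "\<theta>1 = \<theta>2"
proof -
  let ?X = "src1 K p" and ?Y = "tgt1 K p"
  have hom: "p \<in> hom K ?X ?Y" "q \<in> hom K ?X ?Y" using assms(2) by auto
  show ?thesis
    using dense_restricted_modificationD[OF assms(1) hom whisker_restricted_modification[OF hom assms(2)]]
      assms(2-4) by metis
qed

end

locale lifting_setup = strict_two_category K for K :: "('o, 'a, 'c, 'm) two_cat_scheme" +
  fixes A B C :: 'o and f g h :: 'a and \<phi> :: 'c
  assumes f: "f \<in> hom K A C" and g: "g \<in> hom K A B" and h: "h \<in> hom K B C"
    and \<phi>: "\<phi> \<in> cells K f (comp1 K h g)"
begin

abbreviation lifting_map :: "'a \<Rightarrow> 'c \<Rightarrow> 'c" where
  "lifting_map a \<kappa> \<equiv> vcomp K (hcomp K (id2 K h) \<kappa>) (hcomp K \<phi> (id2 K a))"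

lemma lifting_setup_typing [simp]:
  "f \<in> Arr K" "src1 K f = A" "tgt1 K f = C"
  "g \<in> Arr K" "src1 K g = A" "tgt1 K g = B"
  "h \<in> Arr K" "src1 K h = B" "tgt1 K h = C"
  "\<phi> \<in> Cel K" "dom2 K \<phi> = f" "cod2 K \<phi> = comp1 K h g"
  using f g h \<phi> by auto

lemma lifting_map_whisker_right:
  assumes "\<kappa> \<in> Cel K" "dom2 K \<kappa> = comp1 K g a" "a \<in> Arr K" "tgt1 K a = A"
    and "d \<in> Arr K" "tgt1 K d = src1 K a"
  shows "hcomp K (lifting_map a \<kappa>) (id2 K d) = lifting_map (comp1 K a d) (hcomp K \<kappa> (id2 K d))"
proof -
  have "hcomp K (lifting_map a \<kappa>) (id2 K d) =
      vcomp K (hcomp K (hcomp K (id2 K h) \<kappa>) (id2 K d)) (hcomp K (hcomp K \<phi> (id2 K a)) (id2 K d))"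
    by (rule whisker_right_vcomp) (use assms in simp_all)
  also have "hcomp K (hcomp K (id2 K h) \<kappa>) (id2 K d) = hcomp K (id2 K h) (hcomp K \<kappa> (id2 K d))"
    by (rule whisker_left_right) (use assms in simp_all)
  also have "hcomp K (hcomp K \<phi> (id2 K a)) (id2 K d) = hcomp K \<phi> (id2 K (comp1 K a d))"
    by (rule whisker_right_comp1) (use assms in simp_all)
  finally show ?thesis .
qed

lemma lifting_map_vcomp_left:
  assumes "\<kappa> \<in> Cel K" "dom2 K \<kappa> = comp1 K g a" "a \<in> Arr K" "tgt1 K a = A"
    and "\<rho> \<in> Cel K" "dom2 K \<rho> = cod2 K \<kappa>"
  shows "lifting_map a (vcomp K \<rho> \<kappa>) = vcomp K (hcomp K (id2 K h) \<rho>) (lifting_map a \<kappa>)"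
  using assms whisker_left_vcomp[of \<kappa> \<rho> h]
    vcomp_assoc[of "hcomp K \<phi> (id2 K a)" "hcomp K (id2 K h) \<kappa>" "hcomp K (id2 K h) \<rho>"] by simp

lemma lifting_map_vcomp_right:
  assumes "\<sigma> \<in> Cel K" "tgt1 K (dom2 K \<sigma>) = A" "\<kappa> \<in> Cel K" "dom2 K \<kappa> = comp1 K g (cod2 K \<sigma>)"
  shows "lifting_map (dom2 K \<sigma>) (vcomp K \<kappa> (hcomp K (id2 K g) \<sigma>)) =
    vcomp K (lifting_map (cod2 K \<sigma>) \<kappa>) (hcomp K (id2 K f) \<sigma>)"
proof -
  let ?a = "dom2 K \<sigma>" and ?a' = "cod2 K \<sigma>"
  have "lifting_map ?a (vcomp K \<kappa> (hcomp K (id2 K g) \<sigma>)) =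
      vcomp K (hcomp K (id2 K h) \<kappa>) (vcomp K (hcomp K (id2 K h) (hcomp K (id2 K g) \<sigma>)) (hcomp K \<phi> (id2 K ?a)))"
    using assms whisker_left_vcomp[of "hcomp K (id2 K g) \<sigma>" \<kappa> h] by (simp add: vcomp_assoc)
  also have "vcomp K (hcomp K (id2 K h) (hcomp K (id2 K g) \<sigma>)) (hcomp K \<phi> (id2 K ?a)) = hcomp K \<phi> \<sigma>"
    using assms whisker_left_comp1[of \<sigma> g h] hcomp_eq_vcomp_whiskers(2)[of \<sigma> \<phi>] by simp
  also have "\<dots> = vcomp K (hcomp K \<phi> (id2 K ?a')) (hcomp K (id2 K f) \<sigma>)"
    using assms hcomp_eq_vcomp_whiskers(1)[of \<sigma> \<phi>] by simp
  finally show ?thesis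
    using assms by (simp add: vcomp_assoc)
qed

end

locale dense_lifting = lifting_setup K A B C f g h \<phi>
    for K :: "('o, 'a, 'c, 'm) two_cat_scheme" and A B C f g h \<phi> +
  fixes \<D> :: "'o set"
  assumes dense: "dense K \<D>"
    and lifting_on_\<D>: "\<forall>D\<in>\<D>. \<forall>a\<in>hom K D A.
      left_lifting K (comp1 K f a) (comp1 K g a) h (hcomp K \<phi> (id2 K a))"
begin

lemma lifting_map_bij_betw_on_\<D>:
  assumes "D \<in> \<D>" "a \<in> hom K D A" "k \<in> hom K D B"
  shows "bij_betw (lifting_map a) (cells K (comp1 K g a) k) (cells K (comp1 K f a) (comp1 K h k))"
  using lifting_on_\<D> assms unfolding left_lifting_def by simp

lemma lifting_map_inj_on:
  assumes j: "j \<in> hom K X A" and k: "k \<in> hom K X B"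
  shows "inj_on (lifting_map j) (cells K (comp1 K g j) k)"
proof (rule inj_onI)
  fix \<kappa>1 \<kappa>2
  assume \<kappa>1: "\<kappa>1 \<in> cells K (comp1 K g j) k" and \<kappa>2: "\<kappa>2 \<in> cells K (comp1 K g j) k"
    and eq: "lifting_map j \<kappa>1 = lifting_map j \<kappa>2"
  show "\<kappa>1 = \<kappa>2"
  proof (rule dense_cells_eqI[OF dense \<kappa>1 \<kappa>2])
    fix D u assume D: "D \<in> \<D>" and u: "u \<in> hom K D (src1 K (comp1 K g j))"
    have "lifting_map (comp1 K j u) (hcomp K \<kappa>1 (id2 K u)) = hcomp K (lifting_map j \<kappa>1) (id2 K u)"
      using lifting_map_whisker_right[of \<kappa>1 j u] \<kappa>1 j u by simp
    also have "\<dots> = lifting_map (comp1 K j u) (hcomp K \<kappa>2 (id2 K u))"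
      using eq lifting_map_whisker_right[of \<kappa>2 j u] \<kappa>2 j u by simp
    finally show "hcomp K \<kappa>1 (id2 K u) = hcomp K \<kappa>2 (id2 K u)"
      using lifting_map_bij_betw_on_\<D>[of D "comp1 K j u" "comp1 K k u"] D j k u \<kappa>1 \<kappa>2
      by (simp add: bij_betw_def inj_on_def)
  qed
qed

definition restricted_lift :: "'a \<Rightarrow> 'a \<Rightarrow> 'c \<Rightarrow> 'a \<Rightarrow> 'c" where
  "restricted_lift j k \<psi> u =
     the_inv_into (cells K (comp1 K g (comp1 K j u)) (comp1 K k u)) (lifting_map (comp1 K j u))
       (hcomp K \<psi> (id2 K u))"

context
  fixes X j k \<psi>
  assumes j: "j \<in> hom K X A" and k: "k \<in> hom K X B"
    and \<psi>: "\<psi> \<in> cells K (comp1 K f j) (comp1 K h k)"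
begin

lemma restricted_lift:
  assumes "D \<in> \<D>" "u \<in> hom K D X"
  shows restricted_lift_cells:
      "restricted_lift j k \<psi> u \<in> cells K (comp1 K g (comp1 K j u)) (comp1 K k u)"
    and lifting_map_restricted_lift:
      "lifting_map (comp1 K j u) (restricted_lift j k \<psi> u) = hcomp K \<psi> (id2 K u)"
proof -
  have bij: "bij_betw (lifting_map (comp1 K j u)) (cells K (comp1 K g (comp1 K j u)) (comp1 K k u))
      (cells K (comp1 K f (comp1 K j u)) (comp1 K h (comp1 K k u)))"
    using lifting_map_bij_betw_on_\<D>[of D "comp1 K j u" "comp1 K k u"] assms j k by simp
  have "hcomp K \<psi> (id2 K u) \<in> cells K (comp1 K f (comp1 K j u)) (comp1 K h (comp1 K k u))"
    using assms j k \<psi> by simp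
  then show "restricted_lift j k \<psi> u \<in> cells K (comp1 K g (comp1 K j u)) (comp1 K k u)"
    and "lifting_map (comp1 K j u) (restricted_lift j k \<psi> u) = hcomp K \<psi> (id2 K u)"
    unfolding restricted_lift_def
    using bij_betw_apply[OF bij_betw_the_inv_into[OF bij]] f_the_inv_into_f_bij_betw[OF bij]
    by blast+
qed

lemma restricted_lift_unique:
  assumes "D \<in> \<D>" "u \<in> hom K D X" "\<kappa> \<in> cells K (comp1 K g (comp1 K j u)) (comp1 K k u)"
    and "lifting_map (comp1 K j u) \<kappa> = hcomp K \<psi> (id2 K u)"
  shows "restricted_lift j k \<psi> u = \<kappa>"
proof -
  have "inj_on (lifting_map (comp1 K j u)) (cells K (comp1 K g (comp1 K j u)) (comp1 K k u))"
    using lifting_map_inj_on[of "comp1 K j u" D "comp1 K k u"] assms j k by simp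
  from the_inv_into_f_eq[OF this assms(4,3)] show ?thesis
    unfolding restricted_lift_def .
qed

lemma restricted_lift_natural:
  assumes D: "D \<in> \<D>" and u: "u \<in> hom K D X" and v: "v \<in> hom K D X" and \<theta>: "\<theta> \<in> cells K u v"
  shows "vcomp K (hcomp K (id2 K k) \<theta>) (restricted_lift j k \<psi> u) =
    vcomp K (restricted_lift j k \<psi> v) (hcomp K (id2 K (comp1 K g j)) \<theta>)"
proof -
  let ?\<Gamma> = "restricted_lift j k \<psi>" and ?a = "comp1 K j u"
  note \<Gamma>u = restricted_lift[OF D u] and \<Gamma>v = restricted_lift[OF D v]
  have "lifting_map ?a (vcomp K (hcomp K (id2 K k) \<theta>) (?\<Gamma> u)) =
      vcomp K (hcomp K (id2 K (comp1 K h k)) \<theta>) (hcomp K \<psi> (id2 K u))"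
    using lifting_map_vcomp_left[of "?\<Gamma> u" ?a "hcomp K (id2 K k) \<theta>"] whisker_left_comp1[of \<theta> k h]
      \<Gamma>u j k u \<theta> by simp
  also have "\<dots> = hcomp K \<psi> \<theta>"
    using hcomp_eq_vcomp_whiskers(2)[of \<theta> \<psi>] \<psi> j k u \<theta> by simp
  also have "\<dots> = vcomp K (hcomp K \<psi> (id2 K v)) (hcomp K (id2 K (comp1 K f j)) \<theta>)"
    using hcomp_eq_vcomp_whiskers(1)[of \<theta> \<psi>] \<psi> j u \<theta> by simp
  also have "\<dots> = lifting_map ?a (vcomp K (?\<Gamma> v) (hcomp K (id2 K (comp1 K g j)) \<theta>))"
    using lifting_map_vcomp_right[of "hcomp K (id2 K j) \<theta>" "?\<Gamma> v"]
      whisker_left_comp1[of \<theta> j g] whisker_left_comp1[of \<theta> j f] \<Gamma>v j u v \<theta> by simp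
  finally show ?thesis
    using lifting_map_bij_betw_on_\<D>[of D ?a "comp1 K k v"] \<Gamma>u \<Gamma>v D j k u v \<theta>
    by (simp add: bij_betw_def inj_on_def)
qed

lemma restricted_lift_whisker_right:
  assumes "D \<in> \<D>" "D' \<in> \<D>" "d \<in> hom K D' D" "u \<in> hom K D X"
  shows "restricted_lift j k \<psi> (comp1 K u d) = hcomp K (restricted_lift j k \<psi> u) (id2 K d)"
proof (rule restricted_lift_unique)
  note \<Gamma>u = restricted_lift[OF assms(1,4)]
  have "lifting_map (comp1 K j (comp1 K u d)) (hcomp K (restricted_lift j k \<psi> u) (id2 K d)) =
      hcomp K (hcomp K \<psi> (id2 K u)) (id2 K d)"
    using lifting_map_whisker_right[of "restricted_lift j k \<psi> u" "comp1 K j u" d] \<Gamma>u assms j by simp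
  then show "lifting_map (comp1 K j (comp1 K u d)) (hcomp K (restricted_lift j k \<psi> u) (id2 K d)) =
      hcomp K \<psi> (id2 K (comp1 K u d))"
    using whisker_right_comp1[of \<psi> u d] assms j k \<psi> by simp
qed (use assms j k restricted_lift_cells in simp_all)

lemma restricted_lift_modification:
  "restricted_modification \<D> X B (comp1 K g j) k (\<lambda>D. restricted_lift j k \<psi>)"
  unfolding modification_def
  using restricted_lift_cells restricted_lift_natural restricted_lift_whisker_right j by auto

lemma lifting_map_surj: "\<psi> \<in> lifting_map j ` cells K (comp1 K g j) k"
proof -
  have "\<exists>!\<theta>. \<theta> \<in> cells K (comp1 K g j) k \<and>
      (\<forall>D\<in>\<D>. \<forall>u\<in>hom K D X. restricted_lift j k \<psi> u = hcomp K \<theta> (id2 K u))"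
    by (rule dense_restricted_modificationD[OF dense _ k restricted_lift_modification]) (use j in simp)
  then obtain \<theta> where \<theta>: "\<theta> \<in> cells K (comp1 K g j) k"
    and restrict: "\<forall>D\<in>\<D>. \<forall>u\<in>hom K D X. restricted_lift j k \<psi> u = hcomp K \<theta> (id2 K u)"
    by (meson ex1_implies_ex)
  have "lifting_map j \<theta> = \<psi>"
  proof (rule dense_cells_eqI[OF dense _ \<psi>])
    show "lifting_map j \<theta> \<in> cells K (comp1 K f j) (comp1 K h k)"
      using \<theta> j k by simp
    fix D u assume D: "D \<in> \<D>" and u: "u \<in> hom K D (src1 K (comp1 K f j))"
    have "hcomp K (lifting_map j \<theta>) (id2 K u) = lifting_map (comp1 K j u) (hcomp K \<theta> (id2 K u))"
      using lifting_map_whisker_right[of \<theta> j u] \<theta> j u by simp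
    also have "\<dots> = hcomp K \<psi> (id2 K u)"
      using restrict lifting_map_restricted_lift[of D u] D j u by simp
    finally show "hcomp K (lifting_map j \<theta>) (id2 K u) = hcomp K \<psi> (id2 K u)" .
  qed
  then show ?thesis using \<theta> by blast
qed

end

lemma left_lifting_whisker:
  assumes j: "j \<in> hom K X A"
  shows "left_lifting K (comp1 K f j) (comp1 K g j) h (hcomp K \<phi> (id2 K j))"
  unfolding left_lifting_def
proof (intro conjI ballI)
  fix k assume "k \<in> hom K (src1 K (comp1 K g j)) (tgt1 K (comp1 K g j))"
  then have k: "k \<in> hom K X B" using j by simp
  have "lifting_map j ` cells K (comp1 K g j) k = cells K (comp1 K f j) (comp1 K h k)"
    using lifting_map_surj[OF j k] j k by auto
  then show "bij_betw (lifting_map j) (cells K (comp1 K g j) k) (cells K (comp1 K f j) (comp1 K h k))"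
    using lifting_map_inj_on[OF j k] by (simp add: bij_betw_def)
qed (use j in simp)

lemma absolute_left_lifting: "absolute_left_lifting K f g h \<phi>"
  unfolding absolute_left_lifting_def
proof (intro conjI ballI)
  have "A \<in> Ob K"
    using arr_endpoints_Ob(1)[of f] by simp
  then show "left_lifting K f g h \<phi>"
    using left_lifting_whisker[of "id1 K A" A] comp1_id1_right[of f] comp1_id1_right[of g]
      hcomp_id2_id1_right[of \<phi>] by simp
qed (use left_lifting_whisker in simp)

end

theorem lemma7p1:
  fixes K :: "('o, 'a, 'c, 'm) two_cat_scheme"
    and \<D> :: "'o set"
  assumes "two_category K"
    and "dense K \<D>"
    and "A \<in> Ob K" and "B \<in> Ob K" and "C \<in> Ob K"
    and "f \<in> hom K A C" and "g \<in> hom K A B" and "h \<in> hom K B C"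
    and "\<phi> \<in> cells K f (comp1 K h g)"
    and "\<forall>D\<in>\<D>. \<forall>a\<in>hom K D A.
           left_lifting K (comp1 K f a) (comp1 K g a) h (hcomp K \<phi> (id2 K a))"
  shows "absolute_left_lifting K f g h \<phi>"
proof -
  interpret dense_lifting K A B C f g h \<phi> \<D>
    using assms by unfold_locales
  show ?thesis by (rule absolute_left_lifting)
qed

end
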